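(* Let $H=(V,E)$ be an $\alpha$-acyclic hypergraph and let $T=(E,\mathcal{E})$ be a join tree of $H$. Define \[\mathrm{MC}^H_\cap=\Big\{w\in\mathbb{R}^{\mathcal{J}^H}_{\ge 0}\ \Big|\ w(I)=1\ \forall I\in V;\ w_i-\sum_{J\in\mathcal{J}^e:\, J\ni i}w_J=0\ \forall e\in E,\ i\in I\in e;\ \sum_{J\in\mathcal{J}^e:\,J\supseteq J_0}w_J-\sum_{J\in\mathcal{J}^{e'}:\,J\supseteq J_0}w_J=0\ \forall e,e'\in E \text{ with } |e\cap e'|>1,\ J_0\in\mathcal{J}^{e\cap e'}\Big\}\] and let $\mathrm{MC}^H_T$ be the set defined by the same constraints except that the last family of equalities is imposed only for pairs with $\{e,e'\}\in\mathcal{E}$ (and $|e\cap e'|>1$, $J_0\in\mathcal{J}^{e\cap e'}$). Then $\mathrm{MC}^H_\cap=\mathrm{MC}^H_T$.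
   Context: Let $n$ be a positive integer, $[n]=\{1,\dots,n\}$. A hypergraph $H=(V,E)$ here has as vertex set $V$ a family of pairwise disjoint subsets of $[n]$, each of cardinality at least $2$, and hyperedge set $E$ consisting of subsets $e\subseteq V$ with $|e|\ge 2$. Write $L(V)=\{\{I\}: I\in V\}$. For a nonempty $e\subseteq V$, $\mathcal{J}^e$ denotes the family of sets $J\subseteq \bigcup_{I\in e} I$ with $|J\cap I|=1$ for every $I\in e$. Let $\mathcal{J}^H=\bigcup_{e\in L(V)\cup E}\mathcal{J}^e$. For $w\in\mathbb{R}^{\mathcal{J}^H}$ write $w_i=w_{\{i\}}$ and $w(A)=\sum_{i\in A}w_i$. A join tree of $H$ is a tree $T$ with node set $E$ such that for any two distinct nodes $e_1,e_2$, every node $e$ on the unique path in $T$ between them satisfies $e_1\cap e_2\subseteq e$. $H$ is $\alpha$-acyclic in the sense of Fagin; equivalently (Beeri et al.) $H$ admits a join tree. *)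

theory Defs
  imports Complex_Main
begin

text \<open>Vertices are sets of naturals, hyperedges are sets of vertices,
  weight vectors are real functions on sets of naturals (index sets J).\<close>

definition hypergraph :: "nat \<Rightarrow> nat set set \<Rightarrow> nat set set set \<Rightarrow> bool" where
  "hypergraph n V E \<longleftrightarrow>
     (\<forall>I\<in>V. I \<subseteq> {1..n} \<and> card I \<ge> 2) \<and>
     (\<forall>I\<in>V. \<forall>I'\<in>V. I \<noteq> I' \<longrightarrow> I \<inter> I' = {}) \<and>
     (\<forall>e\<in>E. e \<subseteq> V \<and> card e \<ge> 2)"

definition Jfam :: "nat set set \<Rightarrow> nat set set" where
  "Jfam e = {J. J \<subseteq> \<Union>e \<and> (\<forall>I\<in>e. card (J \<inter> I) = 1)}"

definition LV :: "nat set set \<Rightarrow> nat set set set" where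
  "LV V = {{I} | I. I \<in> V}"

definition JH :: "nat set set \<Rightarrow> nat set set set \<Rightarrow> nat set set" where
  "JH V E = \<Union> (Jfam ` (LV V \<union> E))"

definition is_path :: "'a set \<Rightarrow> 'a set set \<Rightarrow> 'a \<Rightarrow> 'a \<Rightarrow> 'a list \<Rightarrow> bool" where
  "is_path N F a b p \<longleftrightarrow> p \<noteq> [] \<and> hd p = a \<and> last p = b \<and> distinct p \<and> set p \<subseteq> N \<and>
     (\<forall>i. Suc i < length p \<longrightarrow> {p ! i, p ! Suc i} \<in> F)"

definition is_tree :: "'a set \<Rightarrow> 'a set set \<Rightarrow> bool" where
  "is_tree N F \<longleftrightarrow> (\<forall>f\<in>F. \<exists>x y. x \<in> N \<and> y \<in> N \<and> x \<noteq> y \<and> f = {x, y}) \<and>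
     (\<forall>a\<in>N. \<forall>b\<in>N. \<exists>!p. is_path N F a b p)"

definition join_tree :: "nat set set set \<Rightarrow> nat set set set set \<Rightarrow> bool" where
  "join_tree E F \<longleftrightarrow> is_tree E F \<and>
     (\<forall>e1\<in>E. \<forall>e2\<in>E. e1 \<noteq> e2 \<longrightarrow>
        (\<forall>p. is_path E F e1 e2 p \<longrightarrow> (\<forall>e\<in>set p. e1 \<inter> e2 \<subseteq> e)))"

text \<open>alpha-acyclicity, via the Beeri et al. characterisation given in the context.\<close>
definition alpha_acyclic :: "nat set set \<Rightarrow> nat set set set \<Rightarrow> bool" where
  "alpha_acyclic V E \<longleftrightarrow> (\<exists>F. join_tree E F)"

definition MC_gen :: "nat set set \<Rightarrow> nat set set set \<Rightarrow> (nat set set \<Rightarrow> nat set set \<Rightarrow> bool)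
                      \<Rightarrow> (nat set \<Rightarrow> real) set" where
  "MC_gen V E P = {w.
     (\<forall>J. J \<notin> JH V E \<longrightarrow> w J = 0) \<and>
     (\<forall>J\<in>JH V E. w J \<ge> 0) \<and>
     (\<forall>I\<in>V. (\<Sum>i\<in>I. w {i}) = 1) \<and>
     (\<forall>e\<in>E. \<forall>I\<in>e. \<forall>i\<in>I. w {i} - (\<Sum>J\<in>{J\<in>Jfam e. i \<in> J}. w J) = 0) \<and>
     (\<forall>e\<in>E. \<forall>e'\<in>E. P e e' \<and> card (e \<inter> e') > 1 \<longrightarrow>
        (\<forall>J0\<in>Jfam (e \<inter> e').
           (\<Sum>J\<in>{J\<in>Jfam e. J0 \<subseteq> J}. w J) - (\<Sum>J\<in>{J\<in>Jfam e'. J0 \<subseteq> J}. w J) = 0))}"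

definition MC_cap :: "nat set set \<Rightarrow> nat set set set \<Rightarrow> (nat set \<Rightarrow> real) set" where
  "MC_cap V E = MC_gen V E (\<lambda>e e'. True)"

definition MC_T :: "nat set set \<Rightarrow> nat set set set \<Rightarrow> nat set set set set \<Rightarrow> (nat set \<Rightarrow> real) set" where
  "MC_T V E F = MC_gen V E (\<lambda>e e'. {e, e'} \<in> F)"

end

theory Submission
  imports Defs
begin

text \<open>Write \<open>m\<^sub>e(J\<^sub>0)\<close> for the marginal of \<open>w\<close> on a hyperedge \<open>e\<close> at a partial
  transversal \<open>J\<^sub>0\<close>. For \<open>S \<subseteq> e\<close>, every transversal of \<open>e\<close> restricts to a unique
  transversal of \<open>S\<close>, so \<open>m\<^sub>e(J\<^sub>0)\<close> is the sum of \<open>m\<^sub>e(J\<^sub>1)\<close> over the transversals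
  \<open>J\<^sub>1 \<supseteq> J\<^sub>0\<close> of \<open>S\<close>. Hence two hyperedges whose marginals agree on their intersection
  also agree on every subset of it. Given \<open>e, e'\<close>, walk along the path from \<open>e\<close> to \<open>e'\<close>
  in the join tree: every node on it contains \<open>e \<inter> e'\<close>, so adjacent nodes have
  intersection containing \<open>e \<inter> e'\<close> (so of size \<open>> 1\<close>), and the tree constraints
  propagate the equality \<open>m\<^sub>e(J\<^sub>0) = m\<^sub>e\<^sub>'(J\<^sub>0)\<close> along the path.\<close>

definition marginal :: "(nat set \<Rightarrow> 'a::comm_monoid_add) \<Rightarrow> nat set set \<Rightarrow> nat set \<Rightarrow> 'a" where
  "marginal w e J0 = (\<Sum>J\<in>{J\<in>Jfam e. J0 \<subseteq> J}. w J)"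

lemma Jfam_restrict:
  assumes "J \<in> Jfam e" and "S \<subseteq> e"
  shows "J \<inter> \<Union>S \<in> Jfam S"
proof -
  have "(J \<inter> \<Union>S) \<inter> I = J \<inter> I" if "I \<in> S" for I
    using that by blast
  then show ?thesis
    using assms unfolding Jfam_def by auto
qed

lemma Jfam_restrict_eq:
  assumes J: "J \<in> Jfam e" and "S \<subseteq> e" and J1: "J1 \<in> Jfam S" and "J1 \<subseteq> J"
  shows "J \<inter> \<Union>S = J1"
proof
  show "J1 \<subseteq> J \<inter> \<Union>S"
    using \<open>J1 \<subseteq> J\<close> J1 unfolding Jfam_def by auto
next
  show "J \<inter> \<Union>S \<subseteq> J1"
  proof
    fix x assume x: "x \<in> J \<inter> \<Union>S"
    then obtain I where I: "I \<in> S" "x \<in> I" by auto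
    have "card (J \<inter> I) = 1"
      using J \<open>S \<subseteq> e\<close> I unfolding Jfam_def by auto
    then obtain a where a: "J \<inter> I = {a}"
      by (rule card_1_singletonE)
    have "card (J1 \<inter> I) = 1"
      using J1 I unfolding Jfam_def by auto
    then obtain b where b: "J1 \<inter> I = {b}"
      by (rule card_1_singletonE)
    have "b \<in> J \<inter> I"
      using b \<open>J1 \<subseteq> J\<close> by blast
    then have "J1 \<inter> I = J \<inter> I"
      using a b by simp
    then show "x \<in> J1"
      using x I by auto
  qed
qed

lemma finite_Jfam:
  assumes "finite (\<Union>e)"
  shows "finite (Jfam e)"
proof (rule finite_subset)
  show "Jfam e \<subseteq> Pow (\<Union>e)"
    unfolding Jfam_def by blast
qed (use assms in simp)

lemma marginal_sum_Jfam_subset: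
  assumes fin: "finite (\<Union>e)" and S: "S \<subseteq> e" and J0: "J0 \<subseteq> \<Union>S"
  shows "marginal w e J0 = (\<Sum>J1\<in>{J1\<in>Jfam S. J0 \<subseteq> J1}. marginal w e J1)"
proof -
  let ?A = "{J\<in>Jfam e. J0 \<subseteq> J}"
  let ?B = "{J1\<in>Jfam S. J0 \<subseteq> J1}"
  let ?restrict = "\<lambda>J. J \<inter> \<Union>S"
  have "finite ?A"
    using finite_Jfam[OF fin] by simp
  moreover have "finite ?B"
    using finite_Jfam[OF finite_subset[OF Union_mono[OF S] fin]] by simp
  moreover have "?restrict ` ?A \<subseteq> ?B"
    using Jfam_restrict[OF _ S] J0 by auto
  ultimately have "(\<Sum>J\<in>?A. w J) = (\<Sum>J1\<in>?B. \<Sum>J\<in>{J\<in>?A. ?restrict J = J1}. w J)"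
    by (rule sum.group[symmetric])
  also have "\<dots> = (\<Sum>J1\<in>?B. marginal w e J1)"
  proof (rule sum.cong[OF refl])
    fix J1 assume J1: "J1 \<in> ?B"
    have "{J\<in>?A. ?restrict J = J1} = {J\<in>Jfam e. J1 \<subseteq> J}"
      using J1 Jfam_restrict_eq[OF _ S, of _ J1] by auto
    then show "(\<Sum>J\<in>{J\<in>?A. ?restrict J = J1}. w J) = marginal w e J1"
      by (simp add: marginal_def)
  qed
  finally show ?thesis
    by (simp add: marginal_def)
qed

lemma marginal_eq_if_marginal_eq_on_Int:
  assumes "finite (\<Union>a)" "finite (\<Union>b)" and "S \<subseteq> a \<inter> b" and "J0 \<in> Jfam S"
    and eq: "\<And>J1. J1 \<in> Jfam (a \<inter> b) \<Longrightarrow> marginal w a J1 = marginal w b J1"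
  shows "marginal w a J0 = marginal w b J0"
proof -
  have J0: "J0 \<subseteq> \<Union>(a \<inter> b)"
    using assms(3,4) unfolding Jfam_def by blast
  have "marginal w a J0 = (\<Sum>J1\<in>{J1\<in>Jfam (a \<inter> b). J0 \<subseteq> J1}. marginal w a J1)"
    using marginal_sum_Jfam_subset[OF assms(1) Int_lower1 J0] .
  also have "\<dots> = (\<Sum>J1\<in>{J1\<in>Jfam (a \<inter> b). J0 \<subseteq> J1}. marginal w b J1)"
    using eq by simp
  also have "\<dots> = marginal w b J0"
    using marginal_sum_Jfam_subset[OF assms(2) Int_lower2 J0, of w] by simp
  finally show ?thesis .
qed

lemma successively_eq_hd_last:
  assumes "successively (\<lambda>x y. f x = f y) xs" and "xs \<noteq> []"
  shows "f (hd xs) = f (last xs)"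
  using assms by (induction xs rule: induct_list012) auto

lemma join_tree_path_Int_subset:
  assumes "join_tree E F" and "e \<in> E" "e' \<in> E" "e \<noteq> e'"
  obtains p where "is_path E F e e' p" and "\<And>x. x \<in> set p \<Longrightarrow> e \<inter> e' \<subseteq> x"
proof -
  have tree: "is_tree E F"
    and path_Int: "\<forall>e1\<in>E. \<forall>e2\<in>E. e1 \<noteq> e2 \<longrightarrow>
      (\<forall>p. is_path E F e1 e2 p \<longrightarrow> (\<forall>x\<in>set p. e1 \<inter> e2 \<subseteq> x))"
    using assms(1) unfolding join_tree_def by simp_all
  obtain p where p: "is_path E F e e' p"
    using tree assms(2,3) unfolding is_tree_def by (meson ex1E)
  moreover have "e \<inter> e' \<subseteq> x" if "x \<in> set p" for x
    using path_Int assms(2-4) p that by simp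
  ultimately show thesis
    by (rule that)
qed

lemma marginal_eq_along_join_tree:
  fixes w :: "nat set \<Rightarrow> 'a::comm_monoid_add"
  assumes "join_tree E F" and fin: "\<And>f. f \<in> E \<Longrightarrow> finite (\<Union>f)"
    and edge_eq: "\<And>a b J1. a \<in> E \<Longrightarrow> b \<in> E \<Longrightarrow> {a, b} \<in> F \<Longrightarrow> card (a \<inter> b) > 1 \<Longrightarrow>
        J1 \<in> Jfam (a \<inter> b) \<Longrightarrow> marginal w a J1 = marginal w b J1"
    and e: "e \<in> E" "e' \<in> E" and card: "card (e \<inter> e') > 1" and J0: "J0 \<in> Jfam (e \<inter> e')"
  shows "marginal w e J0 = marginal w e' J0"
proof (cases "e = e'")
  case False
  obtain p where p: "is_path E F e e' p" and p_Int: "\<And>x. x \<in> set p \<Longrightarrow> e \<inter> e' \<subseteq> x"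
    using join_tree_path_Int_subset[OF assms(1) e False] by metis
  have "marginal w (p ! i) J0 = marginal w (p ! Suc i) J0" if i: "Suc i < length p" for i
  proof -
    let ?a = "p ! i" and ?b = "p ! Suc i"
    have ab: "?a \<in> E" "?b \<in> E" "{?a, ?b} \<in> F"
      using p i unfolding is_path_def by (auto dest: nth_mem)
    have sub: "e \<inter> e' \<subseteq> ?a \<inter> ?b"
      using p_Int i by (simp add: nth_mem)
    have "finite (?a \<inter> ?b)"
      using fin[OF ab(1)] by (auto dest: finite_UnionD)
    then have card_ab: "card (?a \<inter> ?b) > 1"
      using card_mono[OF _ sub] card by linarith
    show ?thesis
      by (rule marginal_eq_if_marginal_eq_on_Int[OF fin[OF ab(1)] fin[OF ab(2)] sub J0
            edge_eq[OF ab card_ab]])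
  qed
  then have "successively (\<lambda>x y. marginal w x J0 = marginal w y J0) p"
    by (simp add: successively_conv_nth)
  moreover have "p \<noteq> []" "hd p = e" "last p = e'"
    using p unfolding is_path_def by simp_all
  ultimately show ?thesis
    using successively_eq_hd_last by metis
qed simp

lemma hypergraph_finite_Union:
  assumes "hypergraph n V E" and "e \<in> E"
  shows "finite (\<Union>e)"
proof (rule finite_subset)
  show "\<Union>e \<subseteq> {1..n}"
    using assms unfolding hypergraph_def by blast
qed simp

lemma MC_gen_marginal_eq:
  assumes "w \<in> MC_gen V E P" and "e \<in> E" "e' \<in> E" "P e e'" "card (e \<inter> e') > 1"
    and "J0 \<in> Jfam (e \<inter> e')"
  shows "marginal w e J0 = marginal w e' J0"
  using assms unfolding MC_gen_def marginal_def by auto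

lemma MC_gen_subset_MC_gen:
  assumes "\<And>w e e' J0. w \<in> MC_gen V E P \<Longrightarrow> e \<in> E \<Longrightarrow> e' \<in> E \<Longrightarrow> Q e e' \<Longrightarrow>
      card (e \<inter> e') > 1 \<Longrightarrow> J0 \<in> Jfam (e \<inter> e') \<Longrightarrow> marginal w e J0 = marginal w e' J0"
  shows "MC_gen V E P \<subseteq> MC_gen V E Q"
proof
  fix w assume w: "w \<in> MC_gen V E P"
  then show "w \<in> MC_gen V E Q"
    using assms[OF w] unfolding MC_gen_def marginal_def by simp
qed

theorem lemma5p3:
  fixes n :: nat and V :: "nat set set" and E :: "nat set set set"
    and F :: "nat set set set set"
  assumes "hypergraph n V E"
    and "alpha_acyclic V E"
    and "join_tree E F"
  shows "MC_cap V E = MC_T V E F"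
  \<comment> \<open>\<open>alpha_acyclic V E\<close> is implied by \<open>join_tree E F\<close> and not needed.\<close>
proof
  show "MC_cap V E \<subseteq> MC_T V E F"
    unfolding MC_cap_def MC_T_def by (rule MC_gen_subset_MC_gen) (rule MC_gen_marginal_eq; simp)
  show "MC_T V E F \<subseteq> MC_cap V E"
    unfolding MC_cap_def MC_T_def
  proof (rule MC_gen_subset_MC_gen)
    fix w e e' J0
    assume w: "w \<in> MC_gen V E (\<lambda>e e'. {e, e'} \<in> F)"
      and "e \<in> E" "e' \<in> E" "card (e \<inter> e') > 1" "J0 \<in> Jfam (e \<inter> e')"
    then show "marginal w e J0 = marginal w e' J0"
      using marginal_eq_along_join_tree[OF assms(3) hypergraph_finite_Union[OF assms(1)]
          MC_gen_marginal_eq[OF w]] by simp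
  qed
qed

end
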